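(* Let $\pi_1,\pi_2$ be two policies with the same information set $\mathcal{I}$ in a finite-horizon POMDP $\mathcal{M}$, and let $j\in\{\mathcal{S},\mathcal{O}\}$. Let $\mathcal{T}_j(\pi_1,\pi_2)$ be the set of length-$T$ trajectories $\tau_j$ (over states if $j=\mathcal{S}$, over observations if $j=\mathcal{O}$) that have positive probability under $p^{\pi_1}$ or under $p^{\pi_2}$, and let $\tau_j^\star\in\arg\max_{\tau\in\mathcal{T}_j(\pi_1,\pi_2)}H(d(\tau))$. Then $$\big|J^{j}(\pi_1)-J^{j}(\pi_2)\big|\le T\,H(d(\tau_j^\star))\,d^{TV}(\pi_1,\pi_2),$$ where $d^{TV}(\pi_1,\pi_2):=\sup_{i\in\mathcal{I}}d^{TV}\big(\pi_1(\cdot\mid i),\pi_2(\cdot\mid i)\big)$.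
   Context: A finite-horizon POMDP $\mathcal{M}=(\mathcal{S},\mathcal{A},\mathcal{O},\mathbb{P},\mathbb{O},T,\mu)$ has finite state, action and observation sets, transition kernel $\mathbb{P}(s'\mid s,a)$, observation kernel $\mathbb{O}(o\mid s)$, horizon $T$, initial distribution $\mu$. Under a policy $\pi:\mathcal{I}\to\Delta(\mathcal{A})$: $s_1\sim\mu$, $o_t\sim\mathbb{O}(\cdot\mid s_t)$ for $t\le T$, and for $t<T$, $a_t\sim\pi(\cdot\mid i_t)$, $s_{t+1}\sim\mathbb{P}(\cdot\mid s_t,a_t)$, where $i_t$ is a deterministic function of the history $(o_1,a_1,\dots,a_{t-1},o_t)$. $p^\pi$ is the law of the joint trajectory, with state trajectory $\tau_{\mathcal{S}}=(s_1,\dots,s_T)$ and observation trajectory $\tau_{\mathcal{O}}=(o_1,\dots,o_T)$. For a sequence $x=(x_1,\dots,x_T)$ over a finite set, $d(x)$ is its empirical distribution $d_y(x)=\frac1T\sum_t\mathbf{1}\{x_t=y\}$ and $H$ is Shannon entropy (natural log). Objectives: $J^{\mathcal{S}}(\pi)=\mathbb{E}_{p^\pi}[H(d(\tau_{\mathcal{S}}))]$ (Maximum State Entropy) and $J^{\mathcal{O}}(\pi)=\mathbb{E}_{p^\pi}[H(d(\tau_{\mathcal{O}}))]$ (Maximum Observation Entropy). $d^{TV}(p,q)=\frac12\sum_x|p(x)-q(x)|$ is total variation distance. *)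

theory Defs
  imports "HOL-Probability.Probability"
begin

text \<open>A policy is a map pi from an
information set 'i to distributions over actions; the information
i_t = info (o_1..o_t) (a_1..a_{t-1}) is a deterministic function of the history.
Trajectories are lists: states ss (length T), observations os (length T),
actions as (length T-1), 0-indexed.\<close>

definition trajs :: "nat \<Rightarrow> ('s list \<times> 'o list \<times> 'a list) set" where
  "trajs T = {(ss, os, as). length ss = T \<and> length os = T \<and> length as = T - 1}"

definition traj_prob ::
  "'s pmf \<Rightarrow> ('s \<Rightarrow> 'a \<Rightarrow> 's pmf) \<Rightarrow> ('s \<Rightarrow> 'o pmf) \<Rightarrow> ('o list \<Rightarrow> 'a list \<Rightarrow> 'i)
   \<Rightarrow> ('i \<Rightarrow> 'a pmf) \<Rightarrow> nat \<Rightarrow> 's list \<Rightarrow> 'o list \<Rightarrow> 'a list \<Rightarrow> real" where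
  "traj_prob mu P Obs info pol T ss os as =
     pmf mu (ss ! 0)
     * (\<Prod>t<T. pmf (Obs (ss ! t)) (os ! t))
     * (\<Prod>t<T - 1. pmf (pol (info (take (Suc t) os) (take t as))) (as ! t)
                   * pmf (P (ss ! t) (as ! t)) (ss ! Suc t))"

text \<open>Empirical distribution of a length-T sequence and Shannon entropy (natural log;
0 ln 0 = 0 since ln 0 = 0 in Isabelle).\<close>

definition emp_dist :: "nat \<Rightarrow> 'x list \<Rightarrow> 'x \<Rightarrow> real" where
  "emp_dist T xs y = real (card {t. t < T \<and> xs ! t = y}) / real T"

definition shannon_H :: "('x::finite \<Rightarrow> real) \<Rightarrow> real" where
  "shannon_H d = - (\<Sum>y\<in>UNIV. d y * ln (d y))"

definition state_traj_prob where
  "state_traj_prob mu P Obs info pol T ss =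
     (\<Sum>(ss', os, as)\<in>trajs T. if ss' = ss then traj_prob mu P Obs info pol T ss' os as else 0)"

definition obs_traj_prob where
  "obs_traj_prob mu P Obs info pol T os =
     (\<Sum>(ss, os', as)\<in>trajs T. if os' = os then traj_prob mu P Obs info pol T ss os' as else 0)"

definition J_state where
  "J_state mu P Obs info pol T =
     (\<Sum>(ss, os, as)\<in>trajs T. traj_prob mu P Obs info pol T ss os as * shannon_H (emp_dist T ss))"

definition J_obs where
  "J_obs mu P Obs info pol T =
     (\<Sum>(ss, os, as)\<in>trajs T. traj_prob mu P Obs info pol T ss os as * shannon_H (emp_dist T os))"

definition tv_pmf :: "('x::finite) pmf \<Rightarrow> 'x pmf \<Rightarrow> real" where
  "tv_pmf p q = (1/2) * (\<Sum>x\<in>UNIV. \<bar>pmf p x - pmf q x\<bar>)"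

definition tv_policy :: "('i \<Rightarrow> ('x::finite) pmf) \<Rightarrow> ('i \<Rightarrow> 'x pmf) \<Rightarrow> real" where
  "tv_policy pol1 pol2 = (SUP i. tv_pmf (pol1 i) (pol2 i))"

end

theory Submission
  imports Defs
begin

text \<open>The trajectory law factorises as the law of the first \<open>T\<close> steps times a one-step kernel
  in which the policy enters only through the action probabilities. Peeling off one step at a
  time shows that the \<open>\<ell>\<^sub>1\<close>-distance between the trajectory laws of the two policies grows by at
  most \<open>2 d\<^sup>T\<^sup>V(\<pi>\<^sub>1, \<pi>\<^sub>2)\<close> per action, hence is at most \<open>2 (T - 1) d\<^sup>T\<^sup>V(\<pi>\<^sub>1, \<pi>\<^sub>2)\<close>. The entropy of
  an empirical distribution is nonnegative and, on every trajectory charged by either law, at most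
  the maximal entropy \<open>M\<close>; so the expected entropies differ by at most \<open>M/2\<close> times that
  \<open>\<ell>\<^sub>1\<close>-distance, which gives the bound even with \<open>T - 1\<close> in place of \<open>T\<close>.\<close>

lemma sum_UNIV_prod:
  "(\<Sum>y\<in>UNIV. f y) = (\<Sum>a\<in>(UNIV :: 'a::finite set). \<Sum>b\<in>(UNIV :: 'b::finite set). f (a, b))"
  unfolding UNIV_Times_UNIV[symmetric] sum.cartesian_product by simp

lemma sum_pmf_UNIV: "(\<Sum>x\<in>(UNIV :: 'x::finite set). pmf p x) = 1"
  by (rule sum_pmf_eq_1) auto

lemma abs_sum_mult_diff_le:
  fixes p q f :: "'x \<Rightarrow> real"
  assumes "finite A" "sum p A = 1" "sum q A = 1"
    and bounded: "\<And>x. x \<in> A \<Longrightarrow> p x \<noteq> q x \<Longrightarrow> 0 \<le> f x \<and> f x \<le> M"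
  shows "\<bar>(\<Sum>x\<in>A. p x * f x) - (\<Sum>x\<in>A. q x * f x)\<bar> \<le> M / 2 * (\<Sum>x\<in>A. \<bar>p x - q x\<bar>)"
proof -
  \<comment> \<open>Centering \<open>f\<close> at \<open>M/2\<close> costs nothing since \<open>p\<close> and \<open>q\<close> have equal mass.\<close>
  have "(\<Sum>x\<in>A. (p x - q x) * (M / 2)) = 0"
    unfolding sum_distrib_right[symmetric] sum_subtractf using assms(2,3) by simp
  then have "(\<Sum>x\<in>A. p x * f x) - (\<Sum>x\<in>A. q x * f x) = (\<Sum>x\<in>A. (p x - q x) * (f x - M / 2))"
    by (simp add: right_diff_distrib left_diff_distrib sum_subtractf)
  also have "\<bar>\<dots>\<bar> \<le> (\<Sum>x\<in>A. \<bar>p x - q x\<bar> * \<bar>f x - M / 2\<bar>)"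
    unfolding abs_mult[symmetric] by (rule sum_abs)
  also have "\<dots> \<le> (\<Sum>x\<in>A. \<bar>p x - q x\<bar> * (M / 2))"
  proof (rule sum_mono)
    fix x assume "x \<in> A"
    show "\<bar>p x - q x\<bar> * \<bar>f x - M / 2\<bar> \<le> \<bar>p x - q x\<bar> * (M / 2)"
    proof (cases "p x = q x")
      case False
      then have "\<bar>f x - M / 2\<bar> \<le> M / 2" using bounded[OF \<open>x \<in> A\<close>] by linarith
      then show ?thesis by (rule mult_left_mono) simp
    qed simp
  qed
  also have "\<dots> = M / 2 * (\<Sum>x\<in>A. \<bar>p x - q x\<bar>)"
    by (simp add: sum_distrib_left mult.commute)
  finally show ?thesis .
qed

lemma sum_abs_mult_diff_le:
  fixes k l :: "'y \<Rightarrow> real"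
  assumes "finite B" "sum k B = 1" "\<And>y. y \<in> B \<Longrightarrow> 0 \<le> k y" "0 \<le> q"
  shows "(\<Sum>y\<in>B. \<bar>p * k y - q * l y\<bar>) \<le> \<bar>p - q\<bar> + q * (\<Sum>y\<in>B. \<bar>k y - l y\<bar>)"
proof -
  have "(\<Sum>y\<in>B. \<bar>p * k y - q * l y\<bar>) \<le> (\<Sum>y\<in>B. \<bar>p - q\<bar> * k y + q * \<bar>k y - l y\<bar>)"
  proof (rule sum_mono)
    fix y assume "y \<in> B"
    have "p * k y - q * l y = (p - q) * k y + q * (k y - l y)" by algebra
    then show "\<bar>p * k y - q * l y\<bar> \<le> \<bar>p - q\<bar> * k y + q * \<bar>k y - l y\<bar>"
      using assms(3)[OF \<open>y \<in> B\<close>] assms(4) by (simp add: abs_mult abs_triangle_ineq[THEN order_trans])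
  qed
  also have "\<dots> = \<bar>p - q\<bar> + q * (\<Sum>y\<in>B. \<bar>k y - l y\<bar>)"
    using assms(2) by (simp add: sum.distrib sum_distrib_left[symmetric])
  finally show ?thesis .
qed

lemma trajs_finite: "finite (trajs T :: ('s::finite list \<times> 'o::finite list \<times> 'a::finite list) set)"
proof -
  have trajs_eq: "trajs T = {ss. length ss = T} \<times> {os. length os = T} \<times> {as. length as = T - 1}"
    unfolding trajs_def by auto
  have finite_lists: "finite {xs :: 'x::finite list. length xs = n}" for n
    using finite_lists_length_eq[of "UNIV :: 'x set" n] by simp
  show ?thesis unfolding trajs_eq by (intro finite_cartesian_product finite_lists)
qed

definition traj_snoc :: "'s list \<times> 'o list \<times> 'a list \<Rightarrow> 'a \<times> 's \<times> 'o \<Rightarrow> 's list \<times> 'o list \<times> 'a list" where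
  "traj_snoc = (\<lambda>(ss, os, as) (a, s, ob). (ss @ [s], os @ [ob], as @ [a]))"

lemma trajs_Suc:
  assumes "1 \<le> T"
  shows "trajs (Suc T) = case_prod traj_snoc ` (trajs T \<times> UNIV)"
proof
  show "case_prod traj_snoc ` (trajs T \<times> UNIV) \<subseteq> trajs (Suc T)"
    using assms by (auto simp: traj_snoc_def trajs_def)
next
  show "trajs (Suc T) \<subseteq> case_prod traj_snoc ` (trajs T \<times> UNIV)"
  proof
    fix z assume "z \<in> trajs (Suc T)"
    then obtain ss os as where z: "z = (ss, os, as)"
      and len: "length ss = Suc T" "length os = Suc T" "length as = T"
      by (auto simp: trajs_def)
    then have "ss \<noteq> []" "os \<noteq> []" "as \<noteq> []" using assms by auto
    then have "z = traj_snoc (butlast ss, butlast os, butlast as) (last as, last ss, last os)"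
      by (simp add: z traj_snoc_def)
    moreover have "(butlast ss, butlast os, butlast as) \<in> trajs T"
      using len by (simp add: trajs_def)
    ultimately show "z \<in> case_prod traj_snoc ` (trajs T \<times> UNIV)" by force
  qed
qed

lemma sum_trajs_Suc:
  fixes g :: "'s::finite list \<times> 'o::finite list \<times> 'a::finite list \<Rightarrow> 'r::comm_monoid_add"
  assumes "1 \<le> T"
  shows "sum g (trajs (Suc T)) = (\<Sum>x\<in>trajs T. \<Sum>y\<in>UNIV. g (traj_snoc x y))"
proof -
  have "sum g (trajs (Suc T)) = sum (g \<circ> case_prod traj_snoc) (trajs T \<times> UNIV)"
    unfolding trajs_Suc[OF assms]
    by (rule sum.reindex) (auto simp: inj_on_def traj_snoc_def split: prod.splits)
  then show ?thesis by (simp add: sum.cartesian_product case_prod_unfold)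
qed

lemma sum_trajs_1:
  fixes g :: "'s::finite list \<times> 'o::finite list \<times> 'a::finite list \<Rightarrow> 'r::comm_monoid_add"
  shows "sum g (trajs 1) = (\<Sum>s\<in>UNIV. \<Sum>ob\<in>UNIV. g ([s], [ob], []))"
proof -
  have trajs_1: "trajs 1 = (\<lambda>(s, ob). ([s], [ob], [])) ` (UNIV :: ('s \<times> 'o) set)"
    by (auto simp: trajs_def length_Suc_conv image_iff)
  have inj: "inj (\<lambda>(s :: 's, ob :: 'o). ([s], [ob], [] :: 'a list))"
    by (auto simp: inj_def)
  show ?thesis unfolding trajs_1 sum.reindex[OF inj] by (simp add: sum_UNIV_prod)
qed

definition traj_law ::
  "'s pmf \<Rightarrow> ('s \<Rightarrow> 'a \<Rightarrow> 's pmf) \<Rightarrow> ('s \<Rightarrow> 'o pmf) \<Rightarrow> ('o list \<Rightarrow> 'a list \<Rightarrow> 'i)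
   \<Rightarrow> ('i \<Rightarrow> 'a pmf) \<Rightarrow> nat \<Rightarrow> 's list \<times> 'o list \<times> 'a list \<Rightarrow> real" where
  "traj_law mu P Obs info pol T = (\<lambda>(ss, os, as). traj_prob mu P Obs info pol T ss os as)"

lemma traj_prob_nonneg: "0 \<le> traj_prob mu P Obs info pol T ss os as"
  unfolding traj_prob_def by (intro mult_nonneg_nonneg prod_nonneg) auto

lemma traj_law_nonneg: "0 \<le> traj_law mu P Obs info pol T x"
  by (simp add: traj_law_def traj_prob_nonneg split: prod.splits)

lemma traj_law_1: "traj_law mu P Obs info pol 1 ([s], [ob], []) = pmf mu s * pmf (Obs s) ob"
  by (simp add: traj_law_def traj_prob_def)

definition step_prob ::
  "('s \<Rightarrow> 'a \<Rightarrow> 's pmf) \<Rightarrow> ('s \<Rightarrow> 'o pmf) \<Rightarrow> ('o list \<Rightarrow> 'a list \<Rightarrow> 'i) \<Rightarrow> ('i \<Rightarrow> 'a pmf)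
   \<Rightarrow> 's list \<times> 'o list \<times> 'a list \<Rightarrow> 'a \<times> 's \<times> 'o \<Rightarrow> real" where
  "step_prob P Obs info pol = (\<lambda>(ss, os, as) (a, s, ob).
     pmf (pol (info os as)) a * pmf (P (last ss) a) s * pmf (Obs s) ob)"

lemma traj_prob_snoc:
  fixes P :: "'s \<Rightarrow> 'a \<Rightarrow> 's pmf"
  assumes len: "length ss = T" "length os = T" "length as = T - 1" and "1 \<le> T"
  shows "traj_prob mu P Obs info pol (Suc T) (ss @ [s]) (os @ [ob]) (as @ [a]) =
    traj_prob mu P Obs info pol T ss os as *
      (pmf (pol (info os as)) a * pmf (P (last ss) a) s * pmf (Obs s) ob)"
proof -
  define act_trans where "act_trans ss os as t =
    pmf (pol (info (take (Suc t) os) (take t as))) (as ! t) * pmf (P (ss ! t) (as ! t)) (ss ! Suc t)"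
    for ss os as t
  have "(ss @ [s]) ! 0 = ss ! 0" using len \<open>1 \<le> T\<close> by (simp add: nth_append)
  moreover have "(\<Prod>t<Suc T. pmf (Obs ((ss @ [s]) ! t)) ((os @ [ob]) ! t)) =
      (\<Prod>t<T. pmf (Obs (ss ! t)) (os ! t)) * pmf (Obs s) ob"
    using len by (simp add: prod.lessThan_Suc nth_append)
  moreover have "(\<Prod>t<T. act_trans (ss @ [s]) (os @ [ob]) (as @ [a]) t) =
      (\<Prod>t<T - 1. act_trans ss os as t) * (pmf (pol (info os as)) a * pmf (P (last ss) a) s)"
  proof -
    have "T = Suc (T - 1)" using \<open>1 \<le> T\<close> by simp
    then have "(\<Prod>t<T. act_trans (ss @ [s]) (os @ [ob]) (as @ [a]) t) =
        (\<Prod>t<T - 1. act_trans (ss @ [s]) (os @ [ob]) (as @ [a]) t)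
          * act_trans (ss @ [s]) (os @ [ob]) (as @ [a]) (T - 1)"
      by (metis prod.lessThan_Suc)
    moreover have "(\<Prod>t<T - 1. act_trans (ss @ [s]) (os @ [ob]) (as @ [a]) t) =
        (\<Prod>t<T - 1. act_trans ss os as t)"
      using len by (intro prod.cong) (auto simp: act_trans_def nth_append)
    moreover have "act_trans (ss @ [s]) (os @ [ob]) (as @ [a]) (T - 1) =
        pmf (pol (info os as)) a * pmf (P (last ss) a) s"
    proof -
      have "ss ! (T - 1) = last ss" using len \<open>1 \<le> T\<close> by (subst last_conv_nth) auto
      then show ?thesis using len \<open>1 \<le> T\<close> by (simp add: act_trans_def nth_append)
    qed
    ultimately show ?thesis by simp
  qed
  ultimately show ?thesis
    by (simp add: traj_prob_def act_trans_def mult_ac)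
qed

lemma traj_law_snoc:
  assumes "1 \<le> T" "x \<in> trajs T"
  shows "traj_law mu P Obs info pol (Suc T) (traj_snoc x y) =
    traj_law mu P Obs info pol T x * step_prob P Obs info pol x y"
proof -
  obtain ss os as where x: "x = (ss, os, as)"
    and len: "length ss = T" "length os = T" "length as = T - 1"
    using assms(2) by (auto simp: trajs_def)
  obtain a s ob where y: "y = (a, s, ob)" by (cases y)
  show ?thesis using traj_prob_snoc[OF len assms(1)]
    by (simp add: x y traj_law_def step_prob_def traj_snoc_def)
qed

lemma step_prob_nonneg: "0 \<le> step_prob P Obs info pol x y"
  by (simp add: step_prob_def split: prod.splits)

lemma sum_step_prob:
  fixes P :: "'s::finite \<Rightarrow> 'a::finite \<Rightarrow> 's pmf" and Obs :: "'s \<Rightarrow> 'o::finite pmf"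
  shows "(\<Sum>y\<in>UNIV. step_prob P Obs info pol x y) = 1"
proof -
  obtain ss os as where x: "x = (ss, os, as)" by (cases x)
  have "(\<Sum>y\<in>UNIV. step_prob P Obs info pol x y) =
      (\<Sum>a\<in>UNIV. pmf (pol (info os as)) a *
        (\<Sum>s\<in>UNIV. pmf (P (last ss) a) s * (\<Sum>ob\<in>UNIV. pmf (Obs s) ob)))"
    by (simp add: x step_prob_def sum_UNIV_prod sum_distrib_left mult.assoc)
  then show ?thesis by (simp add: sum_pmf_UNIV)
qed

lemma sum_traj_law:
  fixes mu :: "'s::finite pmf" and P :: "'s \<Rightarrow> 'a::finite \<Rightarrow> 's pmf" and Obs :: "'s \<Rightarrow> 'o::finite pmf"
  assumes "1 \<le> T"
  shows "(\<Sum>x\<in>trajs T. traj_law mu P Obs info pol T x) = 1"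
  using assms
proof (induction T rule: nat_induct_at_least)
  case base
  show ?case
    by (simp add: sum_trajs_1[simplified] traj_law_1[simplified] sum_distrib_left[symmetric] sum_pmf_UNIV)
next
  case (Suc T)
  have "(\<Sum>x\<in>trajs (Suc T). traj_law mu P Obs info pol (Suc T) x) =
      (\<Sum>x\<in>trajs T. traj_law mu P Obs info pol T x * (\<Sum>y\<in>UNIV. step_prob P Obs info pol x y))"
    using Suc.hyps by (simp add: sum_trajs_Suc traj_law_snoc sum_distrib_left)
  then show ?case by (simp add: sum_step_prob Suc.IH)
qed

lemma tv_pmf_nonneg: "0 \<le> tv_pmf p q"
  unfolding tv_pmf_def by (simp add: sum_nonneg)

lemma tv_pmf_le_1: "tv_pmf p q \<le> 1"
proof -
  have "(\<Sum>x\<in>UNIV. \<bar>pmf p x - pmf q x\<bar>) \<le> (\<Sum>x\<in>UNIV. pmf p x + pmf q x)"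
    by (intro sum_mono) (simp add: abs_le_iff)
  also have "\<dots> = 2" by (simp add: sum.distrib sum_pmf_UNIV)
  finally show ?thesis unfolding tv_pmf_def by simp
qed

lemma tv_pmf_le_tv_policy: "tv_pmf (pol1 i) (pol2 i) \<le> tv_policy pol1 pol2"
  unfolding tv_policy_def by (rule cSUP_upper) (auto intro: bdd_aboveI[of _ 1] tv_pmf_le_1)

lemma tv_policy_nonneg: "0 \<le> tv_policy pol1 pol2"
  using tv_pmf_nonneg tv_pmf_le_tv_policy by (rule order_trans)

lemma sum_abs_step_prob_diff:
  fixes P :: "'s::finite \<Rightarrow> 'a::finite \<Rightarrow> 's pmf" and Obs :: "'s \<Rightarrow> 'o::finite pmf"
  shows "(\<Sum>y\<in>UNIV. \<bar>step_prob P Obs info pol1 (ss, os, as) y - step_prob P Obs info pol2 (ss, os, as) y\<bar>)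
    = 2 * tv_pmf (pol1 (info os as)) (pol2 (info os as))"
proof -
  let ?q1 = "pol1 (info os as)" and ?q2 = "pol2 (info os as)"
  have "\<bar>step_prob P Obs info pol1 (ss, os, as) (a, s, ob) - step_prob P Obs info pol2 (ss, os, as) (a, s, ob)\<bar>
      = \<bar>pmf ?q1 a - pmf ?q2 a\<bar> * (pmf (P (last ss) a) s * pmf (Obs s) ob)" for a s ob
    by (simp add: step_prob_def abs_mult left_diff_distrib[symmetric] mult.assoc)
  then have "(\<Sum>y\<in>UNIV. \<bar>step_prob P Obs info pol1 (ss, os, as) y - step_prob P Obs info pol2 (ss, os, as) y\<bar>)
      = (\<Sum>a\<in>UNIV. \<bar>pmf ?q1 a - pmf ?q2 a\<bar> *
          (\<Sum>s\<in>UNIV. pmf (P (last ss) a) s * (\<Sum>ob\<in>UNIV. pmf (Obs s) ob)))"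
    by (simp add: sum_UNIV_prod sum_distrib_left)
  then show ?thesis by (simp add: sum_pmf_UNIV tv_pmf_def)
qed

lemma sum_abs_traj_law_diff_le:
  fixes mu :: "'s::finite pmf" and P :: "'s \<Rightarrow> 'a::finite \<Rightarrow> 's pmf" and Obs :: "'s \<Rightarrow> 'o::finite pmf"
    and pol1 pol2 :: "'i \<Rightarrow> 'a pmf"
  assumes "1 \<le> T"
  shows "(\<Sum>x\<in>trajs T. \<bar>traj_law mu P Obs info pol1 T x - traj_law mu P Obs info pol2 T x\<bar>)
    \<le> 2 * real (T - 1) * tv_policy pol1 pol2"
  using assms
proof (induction T rule: nat_induct_at_least)
  case base
  have "traj_law mu P Obs info pol1 1 x = traj_law mu P Obs info pol2 1 x" for x
    by (simp add: traj_law_def traj_prob_def split: prod.splits)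
  then show ?case by simp
next
  case (Suc T)
  let ?p1 = "traj_law mu P Obs info pol1" and ?p2 = "traj_law mu P Obs info pol2"
  let ?k1 = "step_prob P Obs info pol1" and ?k2 = "step_prob P Obs info pol2"
  let ?tv = "tv_policy pol1 pol2"
  have "(\<Sum>x\<in>trajs (Suc T). \<bar>?p1 (Suc T) x - ?p2 (Suc T) x\<bar>) =
      (\<Sum>x\<in>trajs T. \<Sum>y\<in>UNIV. \<bar>?p1 T x * ?k1 x y - ?p2 T x * ?k2 x y\<bar>)"
    using Suc.hyps by (simp add: sum_trajs_Suc traj_law_snoc)
  also have "\<dots> \<le> (\<Sum>x\<in>trajs T. \<bar>?p1 T x - ?p2 T x\<bar> + ?p2 T x * (\<Sum>y\<in>UNIV. \<bar>?k1 x y - ?k2 x y\<bar>))"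
    by (intro sum_mono sum_abs_mult_diff_le) (auto simp: sum_step_prob traj_law_nonneg step_prob_nonneg)
  also have "\<dots> \<le> (\<Sum>x\<in>trajs T. \<bar>?p1 T x - ?p2 T x\<bar> + ?p2 T x * (2 * ?tv))"
  proof (intro sum_mono add_left_mono mult_left_mono traj_law_nonneg)
    fix x :: "'s list \<times> 'o list \<times> 'a list"
    obtain ss os as where "x = (ss, os, as)" by (cases x)
    then show "(\<Sum>y\<in>UNIV. \<bar>?k1 x y - ?k2 x y\<bar>) \<le> 2 * ?tv"
      by (simp add: sum_abs_step_prob_diff tv_pmf_le_tv_policy)
  qed
  also have "\<dots> = (\<Sum>x\<in>trajs T. \<bar>?p1 T x - ?p2 T x\<bar>) + 2 * ?tv"
    using Suc.hyps by (simp add: sum.distrib sum_distrib_right[symmetric] sum_traj_law)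
  also have "\<dots> \<le> 2 * real (Suc T - 1) * ?tv"
    using Suc.IH Suc.hyps by (simp add: algebra_simps of_nat_diff)
  finally show ?case .
qed

lemma shannon_H_emp_dist_nonneg: "0 \<le> shannon_H (emp_dist T xs)"
proof -
  have "emp_dist T xs y * ln (emp_dist T xs y) \<le> 0" for y
  proof -
    have "card {t. t < T \<and> xs ! t = y} \<le> T"
      using card_mono[of "{..<T}" "{t. t < T \<and> xs ! t = y}"] by auto
    then have "emp_dist T xs y \<le> 1"
      unfolding emp_dist_def by (cases "T = 0") (auto simp: divide_le_eq_1)
    moreover have "0 \<le> emp_dist T xs y" unfolding emp_dist_def by simp
    ultimately show ?thesis by (cases "emp_dist T xs y = 0") (auto intro: mult_nonneg_nonpos)
  qed
  then show ?thesis unfolding shannon_H_def by (simp add: sum_nonpos)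
qed

lemma traj_law_le_state_traj_prob:
  fixes mu :: "'s::finite pmf" and P :: "'s \<Rightarrow> 'a::finite \<Rightarrow> 's pmf" and Obs :: "'s \<Rightarrow> 'o::finite pmf"
  assumes "x \<in> trajs T"
  shows "traj_law mu P Obs info pol T x \<le> state_traj_prob mu P Obs info pol T (fst x)"
  unfolding state_traj_prob_def
  using member_le_sum[OF assms, of "\<lambda>(ss', os, as). if ss' = fst x then traj_prob mu P Obs info pol T ss' os as else 0"]
  by (auto simp: traj_law_def traj_prob_nonneg trajs_finite split: prod.splits)

lemma traj_law_le_obs_traj_prob:
  fixes mu :: "'s::finite pmf" and P :: "'s \<Rightarrow> 'a::finite \<Rightarrow> 's pmf" and Obs :: "'s \<Rightarrow> 'o::finite pmf"
  assumes "x \<in> trajs T"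
  shows "traj_law mu P Obs info pol T x \<le> obs_traj_prob mu P Obs info pol T (fst (snd x))"
  unfolding obs_traj_prob_def
  using member_le_sum[OF assms, of "\<lambda>(ss, os', as). if os' = fst (snd x) then traj_prob mu P Obs info pol T ss os' as else 0"]
  by (auto simp: traj_law_def traj_prob_nonneg trajs_finite split: prod.splits)

lemma abs_diff_expectation_traj_law_le:
  fixes mu :: "'s::finite pmf" and P :: "'s \<Rightarrow> 'a::finite \<Rightarrow> 's pmf" and Obs :: "'s \<Rightarrow> 'o::finite pmf"
    and pol1 pol2 :: "'i \<Rightarrow> 'a pmf" and f :: "'s list \<times> 'o list \<times> 'a list \<Rightarrow> real"
  assumes "1 \<le> T" "0 \<le> M"
    and bounded: "\<And>x. x \<in> trajs T \<Longrightarrow>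
      0 < traj_law mu P Obs info pol1 T x \<or> 0 < traj_law mu P Obs info pol2 T x \<Longrightarrow> 0 \<le> f x \<and> f x \<le> M"
  shows "\<bar>(\<Sum>x\<in>trajs T. traj_law mu P Obs info pol1 T x * f x)
          - (\<Sum>x\<in>trajs T. traj_law mu P Obs info pol2 T x * f x)\<bar>
    \<le> real (T - 1) * M * tv_policy pol1 pol2"
proof -
  let ?p1 = "traj_law mu P Obs info pol1 T" and ?p2 = "traj_law mu P Obs info pol2 T"
  have "\<bar>(\<Sum>x\<in>trajs T. ?p1 x * f x) - (\<Sum>x\<in>trajs T. ?p2 x * f x)\<bar>
      \<le> M / 2 * (\<Sum>x\<in>trajs T. \<bar>?p1 x - ?p2 x\<bar>)"
  proof (rule abs_sum_mult_diff_le[OF trajs_finite sum_traj_law[OF assms(1)] sum_traj_law[OF assms(1)]])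
    fix x assume x: "x \<in> trajs T" and "?p1 x \<noteq> ?p2 x"
    then have "0 < ?p1 x \<or> 0 < ?p2 x"
      using traj_law_nonneg[of mu P Obs info pol1 T x] traj_law_nonneg[of mu P Obs info pol2 T x]
      by linarith
    with x show "0 \<le> f x \<and> f x \<le> M" by (rule bounded)
  qed
  also have "\<dots> \<le> M / 2 * (2 * real (T - 1) * tv_policy pol1 pol2)"
    using assms(2) by (intro mult_left_mono sum_abs_traj_law_diff_le assms(1)) simp
  finally show ?thesis by (simp add: mult_ac)
qed

lemma abs_J_state_diff_le:
  fixes mu :: "'s::finite pmf" and P :: "'s \<Rightarrow> 'a::finite \<Rightarrow> 's pmf" and Obs :: "'s \<Rightarrow> 'o::finite pmf"
    and pol1 pol2 :: "'i \<Rightarrow> 'a pmf"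
  assumes "1 \<le> T" "0 \<le> M"
    and bounded: "\<And>ss. length ss = T \<Longrightarrow>
      0 < state_traj_prob mu P Obs info pol1 T ss \<or> 0 < state_traj_prob mu P Obs info pol2 T ss \<Longrightarrow>
      shannon_H (emp_dist T ss) \<le> M"
  shows "\<bar>J_state mu P Obs info pol1 T - J_state mu P Obs info pol2 T\<bar> \<le> real (T - 1) * M * tv_policy pol1 pol2"
proof -
  have "J_state mu P Obs info pol T
      = (\<Sum>x\<in>trajs T. traj_law mu P Obs info pol T x * shannon_H (emp_dist T (fst x)))" for pol
    unfolding J_state_def traj_law_def by (intro sum.cong) (auto split: prod.splits)
  then show ?thesis
  proof (simp only:, intro abs_diff_expectation_traj_law_le assms(1,2) conjI shannon_H_emp_dist_nonneg)
    fix x assume x: "x \<in> trajs T"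
      and "0 < traj_law mu P Obs info pol1 T x \<or> 0 < traj_law mu P Obs info pol2 T x"
    then have "0 < state_traj_prob mu P Obs info pol1 T (fst x) \<or> 0 < state_traj_prob mu P Obs info pol2 T (fst x)"
      using traj_law_le_state_traj_prob[OF x, of mu P Obs info pol1]
        traj_law_le_state_traj_prob[OF x, of mu P Obs info pol2] by linarith
    moreover have "length (fst x) = T" using x by (auto simp: trajs_def)
    ultimately show "shannon_H (emp_dist T (fst x)) \<le> M" by (intro bounded)
  qed
qed

lemma abs_J_obs_diff_le:
  fixes mu :: "'s::finite pmf" and P :: "'s \<Rightarrow> 'a::finite \<Rightarrow> 's pmf" and Obs :: "'s \<Rightarrow> 'o::finite pmf"
    and pol1 pol2 :: "'i \<Rightarrow> 'a pmf"
  assumes "1 \<le> T" "0 \<le> M"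
    and bounded: "\<And>os. length os = T \<Longrightarrow>
      0 < obs_traj_prob mu P Obs info pol1 T os \<or> 0 < obs_traj_prob mu P Obs info pol2 T os \<Longrightarrow>
      shannon_H (emp_dist T os) \<le> M"
  shows "\<bar>J_obs mu P Obs info pol1 T - J_obs mu P Obs info pol2 T\<bar> \<le> real (T - 1) * M * tv_policy pol1 pol2"
proof -
  have "J_obs mu P Obs info pol T
      = (\<Sum>x\<in>trajs T. traj_law mu P Obs info pol T x * shannon_H (emp_dist T (fst (snd x))))" for pol
    unfolding J_obs_def traj_law_def by (intro sum.cong) (auto split: prod.splits)
  then show ?thesis
  proof (simp only:, intro abs_diff_expectation_traj_law_le assms(1,2) conjI shannon_H_emp_dist_nonneg)
    fix x assume x: "x \<in> trajs T"
      and "0 < traj_law mu P Obs info pol1 T x \<or> 0 < traj_law mu P Obs info pol2 T x"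
    then have "0 < obs_traj_prob mu P Obs info pol1 T (fst (snd x)) \<or> 0 < obs_traj_prob mu P Obs info pol2 T (fst (snd x))"
      using traj_law_le_obs_traj_prob[OF x, of mu P Obs info pol1]
        traj_law_le_obs_traj_prob[OF x, of mu P Obs info pol2] by linarith
    moreover have "length (fst (snd x)) = T" using x by (auto simp: trajs_def)
    ultimately show "shannon_H (emp_dist T (fst (snd x))) \<le> M" by (intro bounded)
  qed
qed

theorem theorem2:
  fixes mu :: "'s::finite pmf"
    and P :: "'s \<Rightarrow> 'a::finite \<Rightarrow> 's pmf"
    and Obs :: "'s \<Rightarrow> 'o::finite pmf"
    and info :: "'o list \<Rightarrow> 'a list \<Rightarrow> 'i"
    and pol1 pol2 :: "'i \<Rightarrow> 'a pmf"
    and T :: nat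
    and tauS :: "'s list" and tauO :: "'o list"
  assumes "T \<ge> 1"
    and tauS_mem: "tauS \<in> {ss. length ss = T \<and>
                 (state_traj_prob mu P Obs info pol1 T ss > 0 \<or> state_traj_prob mu P Obs info pol2 T ss > 0)}"
    and tauS_max: "\<forall>ss \<in> {ss. length ss = T \<and>
                 (state_traj_prob mu P Obs info pol1 T ss > 0 \<or> state_traj_prob mu P Obs info pol2 T ss > 0)}.
                 shannon_H (emp_dist T ss) \<le> shannon_H (emp_dist T tauS)"
    and tauO_mem: "tauO \<in> {os. length os = T \<and>
                 (obs_traj_prob mu P Obs info pol1 T os > 0 \<or> obs_traj_prob mu P Obs info pol2 T os > 0)}"
    and tauO_max: "\<forall>os \<in> {os. length os = T \<and>
                 (obs_traj_prob mu P Obs info pol1 T os > 0 \<or> obs_traj_prob mu P Obs info pol2 T os > 0)}.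
                 shannon_H (emp_dist T os) \<le> shannon_H (emp_dist T tauO)"
  shows "\<bar>J_state mu P Obs info pol1 T - J_state mu P Obs info pol2 T\<bar>
           \<le> real T * shannon_H (emp_dist T tauS) * tv_policy pol1 pol2
       \<and> \<bar>J_obs mu P Obs info pol1 T - J_obs mu P Obs info pol2 T\<bar>
           \<le> real T * shannon_H (emp_dist T tauO) * tv_policy pol1 pol2"
proof -
  let ?tv = "tv_policy pol1 pol2"
  have weaken: "real (T - 1) * c * ?tv \<le> real T * c * ?tv" if "0 \<le> c" for c
    using that tv_policy_nonneg by (intro mult_right_mono) auto
  have "\<bar>J_state mu P Obs info pol1 T - J_state mu P Obs info pol2 T\<bar>
      \<le> real (T - 1) * shannon_H (emp_dist T tauS) * ?tv"
    using tauS_max by (intro abs_J_state_diff_le \<open>T \<ge> 1\<close> shannon_H_emp_dist_nonneg) auto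
  moreover have "\<bar>J_obs mu P Obs info pol1 T - J_obs mu P Obs info pol2 T\<bar>
      \<le> real (T - 1) * shannon_H (emp_dist T tauO) * ?tv"
    using tauO_max by (intro abs_J_obs_diff_le \<open>T \<ge> 1\<close> shannon_H_emp_dist_nonneg) auto
  ultimately show ?thesis
    using weaken[OF shannon_H_emp_dist_nonneg] by (meson order_trans)
qed

end
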